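(* Let $Q,R\in\mathcal D$ with $Q\subset R$, and let $x,y\in Q$. Then $$|\mathcal R(\chi_{R\setminus Q}\mu)(x)|\lesssim\sum_{P\in\mathcal D:\,Q\subset P\subset R}\frac{\mu(P)}{\ell(P)^s},$$ $$|\mathcal R(\chi_{R\setminus Q}\mu)(x)-\mathcal R(\chi_{R\setminus Q}\mu)(y)|\lesssim\frac{|x-y|}{\ell(Q)}\,p(Q,R),$$ and $$\bigl|\mathcal R(\chi_{R\setminus Q}\mu)(x)-\bigl(m_Q(\mathcal R\mu)-m_R(\mathcal R\mu)\bigr)\bigr|\lesssim p(Q,R)+p(R),$$ where the implicit constants depend only on $s$, $d$ and $c_{sep}$.
   Context: $0<s<d$. $E\subset\mathbb R^d$ is a Cantor set built from a compact $Q^0$ by repeatedly choosing, inside each closed "cube" $Q$ of generation $k$, a finite nonempty family of closed children (the cubes of generation $k+1$), such that each child $Q'$ of $Q$ satisfies $\frac18\ell(Q)\le\ell(Q')\le\frac13\ell(Q)$, where $\ell(Q)=\operatorname{diam}(Q)$, and distinct children of $Q$ are at distance $\ge c_{sep}\ell(Q)$. $\mathcal D$ is the family of all such cubes. $\mu$ is a finite Borel measure supported on $E$ with $\mu(Q)>0$ for all $Q\in\mathcal D$. $\mathcal R\nu(x)=\int\frac{x-y}{|x-y|^{s+1}}\,d\nu(y)$ (the $s$-dimensional Riesz transform; $\mathcal R\mu$ is understood as a $\mu$-locally integrable function defined via truncations/principal values). $\Theta(P)=\mu(P)/\ell(P)^s$; $p(Q)=\sum_{P\in\mathcal D,\,P\supset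 Q}\frac{\ell(Q)}{\ell(P)}\Theta(P)$; for $Q\subset R$, $p(Q,R)=\sum_{P\in\mathcal D:\,Q\subset P\subset R}\frac{\ell(Q)}{\ell(P)}\Theta(P)$; $m_Qf=\frac1{\mu(Q)}\int_Qf\,d\mu$. *)

theory Defs
  imports "HOL-Analysis.Analysis" "HOL-Probability.Probability"
begin

definition children :: "(nat \<Rightarrow> 'a::euclidean_space set set) \<Rightarrow> nat \<Rightarrow> 'a set \<Rightarrow> 'a set set" where
  "children D k Q = {Q' \<in> D (Suc k). Q' \<subseteq> Q}"

definition cantor_system :: "real \<Rightarrow> (nat \<Rightarrow> 'a::euclidean_space set set) \<Rightarrow> bool" where
  "cantor_system c D \<longleftrightarrow>
     (\<exists>Q0. compact Q0 \<and> D 0 = {Q0}) \<and>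
     (\<forall>k. \<forall>Q\<in>D k. closed Q) \<and>
     (\<forall>k. \<forall>Q'\<in>D (Suc k). \<exists>Q\<in>D k. Q' \<subseteq> Q) \<and>
     (\<forall>k. \<forall>Q\<in>D k.
        finite (children D k Q) \<and> children D k Q \<noteq> {} \<and>
        (\<forall>Q'\<in>children D k Q. diameter Q / 8 \<le> diameter Q' \<and> diameter Q' \<le> diameter Q / 3) \<and>
        (\<forall>Q1\<in>children D k Q. \<forall>Q2\<in>children D k Q. Q1 \<noteq> Q2 \<longrightarrow>
            (\<forall>x\<in>Q1. \<forall>y\<in>Q2. c * diameter Q \<le> dist x y)))"

definition cubes :: "(nat \<Rightarrow> 'a set set) \<Rightarrow> 'a set set" where
  "cubes D = (\<Union>k. D k)"

definition cantor_set :: "(nat \<Rightarrow> 'a set set) \<Rightarrow> 'a set" where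
  "cantor_set D = (\<Inter>k. \<Union>(D k))"

definition Theta :: "'a::euclidean_space measure \<Rightarrow> real \<Rightarrow> 'a set \<Rightarrow> real" where
  "Theta M s P = measure M P / diameter P powr s"

definition pcoef :: "(nat \<Rightarrow> 'a::euclidean_space set set) \<Rightarrow> 'a measure \<Rightarrow> real \<Rightarrow> 'a set \<Rightarrow> real" where
  "pcoef D M s Q = (\<Sum>P\<in>{P\<in>cubes D. Q \<subseteq> P}. diameter Q / diameter P * Theta M s P)"

definition pcoef2 :: "(nat \<Rightarrow> 'a::euclidean_space set set) \<Rightarrow> 'a measure \<Rightarrow> real \<Rightarrow> 'a set \<Rightarrow> 'a set \<Rightarrow> real" where
  "pcoef2 D M s Q R = (\<Sum>P\<in>{P\<in>cubes D. Q \<subseteq> P \<and> P \<subseteq> R}. diameter Q / diameter P * Theta M s P)"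

definition riesz_kernel :: "real \<Rightarrow> 'a::euclidean_space \<Rightarrow> 'a \<Rightarrow> 'a" where
  "riesz_kernel s x y = (1 / norm (x - y) powr (s + 1)) *\<^sub>R (x - y)"

text \<open>Riesz transform of chi_A mu at x (absolutely convergent integral).\<close>
definition riesz :: "'a::euclidean_space measure \<Rightarrow> real \<Rightarrow> 'a set \<Rightarrow> 'a \<Rightarrow> 'a" where
  "riesz M s A x = (\<integral>y. indicator A y *\<^sub>R riesz_kernel s x y \<partial>M)"

definition riesz_trunc :: "'a::euclidean_space measure \<Rightarrow> real \<Rightarrow> real \<Rightarrow> 'a \<Rightarrow> 'a" where
  "riesz_trunc M s \<epsilon> x = (\<integral>y. indicator {y. \<epsilon> < dist x y} y *\<^sub>R riesz_kernel s x y \<partial>M)"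

definition mean :: "'a::euclidean_space measure \<Rightarrow> 'a set \<Rightarrow> ('a \<Rightarrow> 'a) \<Rightarrow> 'a" where
  "mean M Q f = (1 / measure M Q) *\<^sub>R set_lebesgue_integral M Q f"

end

theory Submission
  imports Defs
begin

text \<open>
  For x in Q and w in the Cantor set outside Q, the smallest cube P between Q and R
  that contains w contains Q and w in different children, so |x - w| \<ge> c l(P).
  On the Cantor set the kernel |x - w|^(-s) and its oscillation |x - y| |x - w|^(-s-1)
  are therefore dominated by step functions over the cubes between Q and R, whose
  integrals are the sums in the first two estimates.

  The same separation gives a positive gap between Q and the rest of the Cantor set.
  For truncation radii below the gap, the truncated transform on Q is the truncated
  transform of \<chi>_Q \<mu> plus R(\<chi>_(-Q) \<mu>), and the former has integral zero over Q because
  the kernel is odd. Hence m_Q(R \<mu>) = m_Q(R(\<chi>_(R-Q) \<mu>) + R(\<chi>_(-R) \<mu>)) and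
  m_R(R \<mu>) = m_R(R(\<chi>_(-R) \<mu>)), and by the second estimate both terms are nearly
  constant on Q and on R respectively.
\<close>

section \<open>The Riesz kernel\<close>

lemma norm_riesz_kernel:
  assumes "0 < s" shows "norm (riesz_kernel s x y) = dist x y powr (-s)"
proof (cases "x = y")
  case False
  then have "norm (riesz_kernel s x y) = norm (x - y) powr 1 / norm (x - y) powr (s + 1)"
    unfolding riesz_kernel_def by simp
  also have "\<dots> = dist x y powr (-s)"
    by (simp only: powr_diff[symmetric] dist_norm) simp
  finally show ?thesis .
qed (simp add: riesz_kernel_def)

lemma norm_riesz_kernel_le:
  assumes "0 < s" "0 < r" "r \<le> dist x y"
  shows "norm (riesz_kernel s x y) \<le> r powr (-s)"
  using norm_riesz_kernel[OF assms(1), of x y] powr_mono2'[of "-s" r "dist x y"] assms by linarith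

lemma powr_neg_decrement_le:
  fixes s u v :: real
  assumes "0 < s" "0 < u" "u \<le> v"
  shows "u powr (-s) - v powr (-s) \<le> s * (v - u) * u powr (-s - 1)"
proof (cases "u = v")
  case False
  then have "u < v" using assms by simp
  have "((\<lambda>t. t powr (-s)) has_real_derivative (-s) * t powr (-s - 1)) (at t)" if "u \<le> t" for t
    using that assms by (intro has_real_derivative_powr) auto
  then obtain z where z: "u < z" "z < v" "v powr (-s) - u powr (-s) = (v - u) * ((-s) * z powr (-s - 1))"
    using MVT2[OF \<open>u < v\<close>] by fastforce
  have "u powr (-s) - v powr (-s) = s * (v - u) * z powr (-s - 1)"
    using z(3) by (simp add: algebra_simps)
  also have "\<dots> \<le> s * (v - u) * u powr (-s - 1)"
    using z assms by (intro mult_left_mono powr_mono2') auto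
  finally show ?thesis .
qed simp

lemma norm_radial_powr_diff_le:
  fixes a b :: "'a::real_normed_vector"
  assumes s: "0 < s" and r: "0 < r" "r \<le> norm a" "norm a \<le> norm b"
  shows "norm ((1 / norm a powr (s + 1)) *\<^sub>R a - (1 / norm b powr (s + 1)) *\<^sub>R b)
        \<le> (2 * s + 3) * norm (a - b) * r powr (-(s + 1))"
proof -
  define f where "f t = t powr (-(s + 1))" for t :: real
  define u v where "u = norm a" and "v = norm b"
  have u: "0 < u" "r \<le> u" "u \<le> v" using r unfolding u_def v_def by auto
  have fpos: "0 \<le> f t" for t unfolding f_def by simp
  have fur: "f u \<le> f r" and fvu: "f v \<le> f u" unfolding f_def using u r s by (auto intro: powr_mono2')
  have uv: "v - u \<le> norm (a - b)"
    unfolding u_def v_def by (metis norm_minus_commute norm_triangle_ineq2)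
  have radial: "(f u - f v) * v \<le> 2 * (s + 1) * norm (a - b) * f r"
  proof (cases "v \<le> 2 * u")
    case True
    have "u powr (-(s + 1) - 1) * u = u powr (-(s + 1) - 1) * u powr 1" using u by simp
    then have fu: "u powr (-(s + 1) - 1) * u = f u"
      unfolding f_def powr_add[symmetric] by (simp add: algebra_simps)
    have "f u - f v \<le> (s + 1) * (v - u) * u powr (-(s + 1) - 1)"
      unfolding f_def using powr_neg_decrement_le[of "s + 1" u v] u s by simp
    then have "(f u - f v) * v \<le> ((s + 1) * (v - u) * u powr (-(s + 1) - 1)) * (2 * u)"
      using True fvu u by (intro mult_mono) auto
    also have "\<dots> = 2 * (s + 1) * (v - u) * f u" unfolding fu[symmetric] by (simp add: algebra_simps)
    also have "\<dots> \<le> 2 * (s + 1) * norm (a - b) * f r"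
      using uv fur u s fpos by (intro mult_mono) auto
    finally show ?thesis .
  next
    case False
    have "(f u - f v) * v \<le> f u * v" using fpos u by (simp add: mult_right_mono)
    also have "\<dots> \<le> f r * (2 * norm (a - b))" using fur False fpos u uv by (intro mult_mono) auto
    also have "\<dots> \<le> 2 * (s + 1) * norm (a - b) * f r" using s fpos by (simp add: algebra_simps mult_left_mono)
    finally show ?thesis .
  qed
  have "f u *\<^sub>R a - f v *\<^sub>R b = f u *\<^sub>R (a - b) + (f u - f v) *\<^sub>R b"
    by (simp add: algebra_simps)
  then have "norm (f u *\<^sub>R a - f v *\<^sub>R b) \<le> f u * norm (a - b) + (f u - f v) * v"
    using norm_triangle_ineq[of "f u *\<^sub>R (a - b)" "(f u - f v) *\<^sub>R b"] fpos[of u] fvu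
    by (simp add: v_def)
  also have "\<dots> \<le> f r * norm (a - b) + 2 * (s + 1) * norm (a - b) * f r"
    using radial mult_right_mono[OF fur, of "norm (a - b)"] by simp
  finally show ?thesis
    unfolding f_def u_def v_def powr_minus_divide by (simp add: algebra_simps)
qed

lemma riesz_kernel_diff_le:
  assumes "0 < s" "0 < r" "r \<le> dist x w" "r \<le> dist y w"
  shows "norm (riesz_kernel s x w - riesz_kernel s y w) \<le> (2 * s + 3) * dist x y * r powr (-(s + 1))"
proof -
  have "norm ((1 / norm a powr (s + 1)) *\<^sub>R a - (1 / norm b powr (s + 1)) *\<^sub>R b)
        \<le> (2 * s + 3) * norm (a - b) * r powr (-(s + 1))"
    if "r \<le> norm a" "r \<le> norm b" for a b :: 'a
    using norm_radial_powr_diff_le[OF assms(1,2), of a b] norm_radial_powr_diff_le[OF assms(1,2), of b a] that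
    by (cases "norm a \<le> norm b") (auto simp: norm_minus_commute)
  from this[of "x - w" "y - w"] show ?thesis
    using assms(3,4) unfolding riesz_kernel_def by (simp add: dist_norm)
qed

section \<open>Cantor cubes\<close>

abbreviation cubes_between :: "(nat \<Rightarrow> 'a set set) \<Rightarrow> 'a set \<Rightarrow> 'a set \<Rightarrow> 'a set set" where
  "cubes_between D Q A \<equiv> {P \<in> cubes D. Q \<subseteq> P \<and> P \<subseteq> A}"

locale cantor_cubes =
  fixes c :: real and D :: "nat \<Rightarrow> 'a::euclidean_space set set"
  assumes c_pos: "0 < c"
    and cantor_system: "cantor_system c D"
    and cube_nonempty: "P \<in> cubes D \<Longrightarrow> P \<noteq> {}"
begin

definition top_cube :: "'a set" where
  "top_cube = (THE Q. D 0 = {Q})"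

lemma generation_zero: "D 0 = {top_cube}" and compact_top_cube: "compact top_cube"
proof -
  obtain Q where Q: "compact Q" "D 0 = {Q}"
    using cantor_system unfolding cantor_system_def by (elim conjE exE) blast
  then have "top_cube = Q" unfolding top_cube_def by (intro the_equality) auto
  with Q show "D 0 = {top_cube}" "compact top_cube" by auto
qed

lemma closed_cube: "Q \<in> D k \<Longrightarrow> closed Q"
  using cantor_system[unfolded cantor_system_def, THEN conjunct2, THEN conjunct1] by blast

lemma parent_cube: "Q' \<in> D (Suc k) \<Longrightarrow> \<exists>Q\<in>D k. Q' \<subseteq> Q"
  using cantor_system[unfolded cantor_system_def, THEN conjunct2, THEN conjunct2, THEN conjunct1] by blast

lemma finite_children: "Q \<in> D k \<Longrightarrow> finite (children D k Q)"
  using cantor_system[unfolded cantor_system_def, THEN conjunct2, THEN conjunct2, THEN conjunct2] by blast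

lemma children_separated:
  assumes "Q \<in> D k" "Q1 \<in> children D k Q" "Q2 \<in> children D k Q" "Q1 \<noteq> Q2" "x \<in> Q1" "y \<in> Q2"
  shows "c * diameter Q \<le> dist x y"
  using cantor_system[unfolded cantor_system_def, THEN conjunct2, THEN conjunct2, THEN conjunct2] assms
  by blast

lemma mem_cubes_iff: "P \<in> cubes D \<longleftrightarrow> (\<exists>k. P \<in> D k)"
  unfolding cubes_def by blast

lemma top_cube_in_cubes: "top_cube \<in> cubes D"
  using generation_zero mem_cubes_iff by blast

lemma cube_subset_top: "P \<in> cubes D \<Longrightarrow> P \<subseteq> top_cube"
proof -
  have "P \<subseteq> top_cube" if "P \<in> D k" for k
  using that proof (induction k arbitrary: P)
    case (Suc k)
    then show ?case using parent_cube by blast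
  qed (simp add: generation_zero)
  then show "P \<in> cubes D \<Longrightarrow> P \<subseteq> top_cube" using mem_cubes_iff by blast
qed

lemma bounded_cube: "P \<in> cubes D \<Longrightarrow> bounded P"
  using bounded_subset[OF compact_imp_bounded[OF compact_top_cube] cube_subset_top] .

lemma finite_generation: "finite (D k)"
proof (induction k)
  case (Suc k)
  have "D (Suc k) \<subseteq> (\<Union>Q\<in>D k. children D k Q)"
    using parent_cube unfolding children_def by blast
  then show ?case using Suc finite_children by (meson finite_UN_I finite_subset)
qed (simp add: generation_zero)

lemma generation_disjoint: "Q1 \<in> D k \<Longrightarrow> Q2 \<in> D k \<Longrightarrow> Q1 \<noteq> Q2 \<Longrightarrow> Q1 \<inter> Q2 = {}"
proof (induction k arbitrary: Q1 Q2)
  case (Suc k)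
  obtain A1 A2 where A: "A1 \<in> D k" "Q1 \<subseteq> A1" "A2 \<in> D k" "Q2 \<subseteq> A2"
    using parent_cube Suc.prems by metis
  show ?case
  proof (rule ccontr)
    assume "Q1 \<inter> Q2 \<noteq> {}"
    then obtain x where x: "x \<in> Q1" "x \<in> Q2" by blast
    then have "A1 = A2" using Suc.IH A by blast
    then have "Q1 \<in> children D k A1" "Q2 \<in> children D k A1"
      using Suc.prems A unfolding children_def by auto
    then have "c * diameter A1 \<le> 0"
      using children_separated[OF A(1) _ _ Suc.prems(3) x] by simp
    then have "diameter A1 \<le> 0" using c_pos by (simp add: mult_le_0_iff)
    moreover have "dist x y \<le> diameter A1" if "y \<in> A1" for y
      using diameter_bounded_bound[OF bounded_cube] x A that mem_cubes_iff by blast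
    ultimately have "A1 \<subseteq> {x}" by (smt (verit) dist_le_zero_iff singleton_iff subsetI)
    then show False using Suc.prems(3) A \<open>A1 = A2\<close> x by blast
  qed
qed (simp add: generation_zero)

lemma ancestor_cube: "Q \<in> D k \<Longrightarrow> j \<le> k \<Longrightarrow> \<exists>B\<in>D j. Q \<subseteq> B"
proof (induction k arbitrary: Q)
  case (Suc k)
  show ?case
  proof (cases "j = Suc k")
    case False
    then have "j \<le> k" using Suc.prems by simp
    with Suc show ?thesis using parent_cube by (meson order_trans)
  qed (use Suc.prems in blast)
qed blast

lemma generation_subset_eq:
  assumes "Q \<in> D k" "A \<in> D k" "Q \<subseteq> A" shows "Q = A"
proof -
  have "Q \<noteq> {}" using cube_nonempty assms(1) mem_cubes_iff by blast
  then show ?thesis using generation_disjoint[OF assms(1,2)] assms(3) by blast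
qed

lemma generation_mono: "Q \<in> D k \<Longrightarrow> A \<in> D j \<Longrightarrow> Q \<subset> A \<Longrightarrow> j < k"
proof (rule ccontr)
  assume "Q \<in> D k" "A \<in> D j" "Q \<subset> A" "\<not> j < k"
  then obtain B where "B \<in> D k" "A \<subseteq> B" using ancestor_cube by (meson not_less)
  then show False using generation_subset_eq \<open>Q \<in> D k\<close> \<open>Q \<subset> A\<close> by blast
qed

lemma cube_meeting_parent_generation:
  assumes "X \<in> D (Suc j)" "A \<in> D j" "z \<in> X" "z \<in> A"
  shows "X \<subseteq> A"
proof -
  obtain A' where "A' \<in> D j" "X \<subseteq> A'" using parent_cube assms(1) by blast
  then show ?thesis using generation_disjoint[OF _ assms(2)] assms(3,4) by blast
qed

lemma cantor_set_covered: "w \<in> cantor_set D \<Longrightarrow> \<exists>W\<in>D k. w \<in> W"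
  unfolding cantor_set_def by blast

lemma finite_cubes_above: "Q \<in> cubes D \<Longrightarrow> finite {P \<in> cubes D. Q \<subseteq> P}"
proof -
  assume "Q \<in> cubes D"
  then obtain k where k: "Q \<in> D k" using mem_cubes_iff by blast
  have "{P \<in> cubes D. Q \<subseteq> P} \<subseteq> insert Q (\<Union>j\<le>k. D j)"
    using generation_mono[OF k] by (force simp: mem_cubes_iff less_imp_le)
  then show ?thesis using finite_generation by (meson finite_UN_I finite_atMost finite_insert finite_subset)
qed

lemma cantor_set_subset_top: "cantor_set D \<subseteq> top_cube"
  using cantor_set_covered[of _ 0] generation_zero by blast

lemma separating_cube:
  assumes "Q \<in> cubes D" "A \<in> cubes D" "Q \<subseteq> A" "w \<in> cantor_set D" "w \<in> A - Q"
  shows "\<exists>P\<in>cubes_between D Q A. w \<in> P \<and> (\<forall>x\<in>Q. c * diameter P \<le> dist x w)"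
proof -
  obtain k j where "Q \<in> D k" "A \<in> D j" using assms(1,2) mem_cubes_iff by blast
  moreover have "Q \<subset> A" using assms(3,5) by blast
  ultimately have "j \<le> k" using generation_mono less_imp_le by blast
  with \<open>Q \<in> D k\<close> \<open>A \<in> D j\<close> show ?thesis using assms(2-5)
    \<comment> \<open>descend from A until the children containing Q and w differ\<close>
  proof (induction "k - j" arbitrary: A j)
    case 0
    then have "j = k" by simp
    then show ?case using generation_subset_eq[of Q k A] 0 by blast
  next
    case (Suc n)
    have "Suc j \<le> k" using Suc.hyps(2) by simp
    then obtain B where B: "B \<in> D (Suc j)" "Q \<subseteq> B" using ancestor_cube Suc.prems(1) by blast
    obtain W where W: "W \<in> D (Suc j)" "w \<in> W" using cantor_set_covered Suc.prems(6) by blast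
    obtain x where "x \<in> Q" using cube_nonempty Suc.prems(1) mem_cubes_iff by blast
    then have "B \<subseteq> A" "W \<subseteq> A"
      using cube_meeting_parent_generation[OF _ Suc.prems(2)] B W Suc.prems(5,7) by blast+
    show ?case
    proof (cases "W = B")
      case True
      have "k - Suc j = n" using Suc.hyps(2) by simp
      from Suc.hyps(1)[OF this[symmetric] Suc.prems(1) B(1) \<open>Suc j \<le> k\<close> _ B(2) Suc.prems(6)]
      obtain P where "P \<in> cubes_between D Q B" "w \<in> P" "\<forall>x\<in>Q. c * diameter P \<le> dist x w"
        using True W Suc.prems(7) B(1) mem_cubes_iff by blast
      then show ?thesis using \<open>B \<subseteq> A\<close> by blast
    next
      case False
      have "B \<in> children D j A" "W \<in> children D j A"
        using B W \<open>B \<subseteq> A\<close> \<open>W \<subseteq> A\<close> unfolding children_def by auto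
      then have "\<forall>x\<in>Q. c * diameter A \<le> dist x w"
        using children_separated[OF Suc.prems(2)] False B W by blast
      then show ?thesis using Suc.prems mem_cubes_iff by blast
    qed
  qed
qed

text \<open>Only finitely many cubes contain Q, so the separating cubes have diameters bounded below.\<close>

lemma cantor_set_gap:
  assumes "Q \<in> cubes D"
  shows "\<exists>\<delta>>0. \<forall>z\<in>Q. \<forall>w\<in>cantor_set D - Q. \<delta> \<le> dist z w"
proof -
  define X where "X = insert 1 (diameter ` {P \<in> cubes_between D Q top_cube. 0 < diameter P})"
  have X: "finite X" "\<And>x. x \<in> X \<Longrightarrow> 0 < x"
  proof -
    have "finite {P \<in> cubes_between D Q top_cube. 0 < diameter P}"
      by (rule finite_subset[OF _ finite_cubes_above[OF assms]]) auto
    then show "finite X" "\<And>x. x \<in> X \<Longrightarrow> 0 < x" unfolding X_def by auto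
  qed
  have bound: "c * Min X \<le> dist z w" if z: "z \<in> Q" and w: "w \<in> cantor_set D - Q" for z w
  proof -
    have "w \<in> top_cube - Q" using w cantor_set_subset_top by blast
    then obtain P where P: "P \<in> cubes_between D Q top_cube" "w \<in> P" "\<forall>x\<in>Q. c * diameter P \<le> dist x w"
      using separating_cube[OF assms top_cube_in_cubes cube_subset_top[OF assms]] w by blast
    have "0 < dist z w" using z w by auto
    also have "dist z w \<le> diameter P"
      using diameter_bounded_bound[OF bounded_cube] P z by blast
    finally have "diameter P \<in> X" using P(1) unfolding X_def by blast
    then have "Min X \<le> diameter P" using X(1) by (rule Min_le[rotated])
    then have "c * Min X \<le> c * diameter P" using c_pos by simp
    also have "\<dots> \<le> dist z w" using P(3) z by blast
    finally show ?thesis .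
  qed
  have "Min X \<in> X" using X(1) by (rule Min_in) (simp add: X_def)
  then have "0 < c * Min X" using X(2) c_pos by simp
  with bound show ?thesis by (intro exI[of _ "c * Min X"]) simp
qed

end

section \<open>Riesz transforms of finite Borel measures\<close>

lemma norm_integral_le_step_majorant:
  fixes f :: "'b \<Rightarrow> 'c::{banach, second_countable_topology}"
  assumes F: "finite F" "\<And>P. P \<in> F \<Longrightarrow> P \<in> sets M" "\<And>P. P \<in> F \<Longrightarrow> emeasure M P < \<infinity>"
    and f: "f \<in> borel_measurable M"
    and bound: "AE w in M. norm (f w) \<le> (\<Sum>P\<in>F. indicator P w * h P)"
  shows "integrable M f" "norm (\<integral>w. f w \<partial>M) \<le> (\<Sum>P\<in>F. measure M P * h P)"
proof -
  have step: "integrable M (\<lambda>w. indicator P w * h P)" if "P \<in> F" for P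
    using F that by simp
  then have g: "integrable M (\<lambda>w. \<Sum>P\<in>F. indicator P w * h P)" by simp
  show "integrable M f"
    using bound by (intro Bochner_Integration.integrable_bound[OF g f]) auto
  have "norm (\<integral>w. f w \<partial>M) \<le> (\<integral>w. norm (f w) \<partial>M)" by (rule integral_norm_bound)
  also have "\<dots> \<le> (\<integral>w. (\<Sum>P\<in>F. indicator P w * h P) \<partial>M)"
    using bound g \<open>integrable M f\<close> by (intro integral_mono_AE) auto
  also have "\<dots> = (\<Sum>P\<in>F. measure M P * h P)"
    using step F(2) by (simp add: Bochner_Integration.integral_sum)
  finally show "norm (\<integral>w. f w \<partial>M) \<le> (\<Sum>P\<in>F. measure M P * h P)" .
qed

lemma (in finite_measure) set_integrable_bounded:
  fixes f :: "'a \<Rightarrow> 'b::{banach, second_countable_topology}"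
  assumes "A \<in> sets M" "f \<in> borel_measurable M" "\<And>z. z \<in> A \<Longrightarrow> norm (f z) \<le> B"
  shows "set_integrable M A f"
  unfolding set_integrable_def
proof (rule integrable_const_bound)
  show "AE z in M. norm (indicator A z *\<^sub>R f z) \<le> \<bar>B\<bar>"
    using assms(3) by (intro AE_I2) (auto simp: indicator_def intro: order_trans[OF _ abs_ge_self])
  show "(\<lambda>z. indicator A z *\<^sub>R f z) \<in> borel_measurable M"
    using assms(1,2) by measurable
qed

lemma norm_mean_diff_le:
  fixes f :: "'a::euclidean_space \<Rightarrow> 'a"
  assumes M: "finite_measure M" and A: "A \<in> sets M" "0 < measure M A"
    and f: "f \<in> borel_measurable M" and bound: "\<And>z. z \<in> A \<Longrightarrow> norm (f z - v) \<le> B"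
  shows "norm (mean M A f - v) \<le> B"
proof -
  have fin: "emeasure M A < \<infinity>" using finite_measure.emeasure_finite[OF M, of A] by (simp add: less_top)
  have "norm (set_lebesgue_integral M A f - measure M A *\<^sub>R v) \<le> measure M A * B"
  proof -
    have meas: "(\<lambda>z. indicator A z *\<^sub>R (f z - v)) \<in> borel_measurable M" using f A(1) by measurable
    have "AE z in M. norm (indicator A z *\<^sub>R (f z - v)) \<le> (\<Sum>P\<in>{A}. indicator P z * B)"
      using bound by (auto simp: indicator_def)
    note step = norm_integral_le_step_majorant[OF _ _ _ meas this]
    have "integrable M (\<lambda>z. indicator A z *\<^sub>R (f z - v))"
      and "norm (\<integral>z. indicator A z *\<^sub>R (f z - v) \<partial>M) \<le> measure M A * B"
      using step A(1) fin by auto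
    moreover have iv: "integrable M (\<lambda>z. indicator A z *\<^sub>R v)" using A(1) fin by simp
    ultimately have "integrable M (\<lambda>z. indicator A z *\<^sub>R (f z - v) + indicator A z *\<^sub>R v)" by simp
    then have "integrable M (\<lambda>z. indicator A z *\<^sub>R f z)" by (simp add: algebra_simps)
    with iv \<open>norm (\<integral>z. indicator A z *\<^sub>R (f z - v) \<partial>M) \<le> measure M A * B\<close> show ?thesis
      using A(1) fin unfolding set_lebesgue_integral_def
      by (simp add: scaleR_diff_right Bochner_Integration.integral_diff)
  qed
  moreover have "mean M A f - v = (1 / measure M A) *\<^sub>R (set_lebesgue_integral M A f - measure M A *\<^sub>R v)"
    unfolding mean_def using A(2) by (simp add: scaleR_diff_right)
  ultimately have "norm (mean M A f - v) \<le> (1 / measure M A) * (measure M A * B)"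
    using A(2) by (simp add: divide_le_eq mult.commute)
  then show ?thesis using A(2) by simp
qed

lemma borel_measurable_riesz_kernel_pair:
  "(\<lambda>p. riesz_kernel s (fst p) (snd p)) \<in> borel_measurable (borel \<Otimes>\<^sub>M borel)"
  unfolding riesz_kernel_def by measurable

lemma borel_measurable_riesz_kernel: "riesz_kernel s x \<in> borel_measurable borel"
  unfolding riesz_kernel_def by measurable

lemma riesz_kernel_antisym: "riesz_kernel s w z = - riesz_kernel s z w"
  unfolding riesz_kernel_def by (simp add: norm_minus_commute scaleR_right_diff_distrib)

lemma norm_truncated_riesz_kernel_le:
  assumes "0 < s" "0 < e"
  shows "norm (indicator (T \<inter> {y. e < dist z y}) w *\<^sub>R riesz_kernel s z w) \<le> e powr (-s)"
  using norm_riesz_kernel_le[OF assms, of z w] by (simp add: indicator_def)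

lemma riesz_trunc_eq_riesz: "riesz_trunc M s e z = riesz M s {y. e < dist z y} z"
  unfolding riesz_trunc_def riesz_def ..

lemma riesz_Un:
  assumes "S \<inter> T = {}"
    and "integrable M (\<lambda>w. indicator S w *\<^sub>R riesz_kernel s x w)"
    and "integrable M (\<lambda>w. indicator T w *\<^sub>R riesz_kernel s x w)"
  shows "riesz M s (S \<union> T) x = riesz M s S x + riesz M s T x"
proof -
  have "indicator (S \<union> T) w *\<^sub>R riesz_kernel s x w
      = indicator S w *\<^sub>R riesz_kernel s x w + indicator T w *\<^sub>R riesz_kernel s x w" for w
    using assms(1) by (auto simp: indicator_def)
  then show ?thesis
    unfolding riesz_def using assms(2,3) by (simp add: Bochner_Integration.integral_add)
qed

locale riesz_measure = finite_measure M for M :: "'a::euclidean_space measure" +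
  fixes s :: real
  assumes sets_M: "sets M = sets borel" and s_pos: "0 < s"
begin

lemma borel_measurable_M: "f \<in> borel_measurable borel \<Longrightarrow> f \<in> borel_measurable M"
  using measurable_cong_sets[OF sets_M refl] by blast

lemma borel_measurable_M_pair:
  "f \<in> borel_measurable (borel \<Otimes>\<^sub>M borel) \<Longrightarrow> f \<in> borel_measurable (M \<Otimes>\<^sub>M M)"
  using measurable_cong_sets[OF sets_pair_measure_cong[OF sets_M sets_M] refl] by blast

lemma borel_measurable_integral_snd:
  fixes g :: "'a \<Rightarrow> 'a \<Rightarrow> 'b::{banach, second_countable_topology}"
  assumes "(\<lambda>p. g (fst p) (snd p)) \<in> borel_measurable (borel \<Otimes>\<^sub>M borel)"
  shows "(\<lambda>x. \<integral>y. g x y \<partial>M) \<in> borel_measurable M"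
  using borel_measurable_M_pair[OF assms]
  by (intro sigma_finite_measure.borel_measurable_lebesgue_integral sigma_finite_measure_axioms)
    (simp add: case_prod_beta)

lemma borel_measurable_riesz: "S \<in> sets borel \<Longrightarrow> riesz M s S \<in> borel_measurable M"
  unfolding riesz_def
  by (intro borel_measurable_integral_snd borel_measurable_scaleR borel_measurable_riesz_kernel_pair
      measurable_compose[OF measurable_snd borel_measurable_indicator])

lemma borel_measurable_indicator_far:
  fixes T :: "'a set"
  assumes "T \<in> sets borel"
  shows "(\<lambda>p. indicator (T \<inter> {y. e < dist (fst p) y}) (snd p) :: real) \<in> borel_measurable (borel \<Otimes>\<^sub>M borel)"
proof -
  have "(\<lambda>p::'a \<times> 'a. dist (fst p) (snd p)) \<in> borel_measurable (borel \<Otimes>\<^sub>M borel)" by measurable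
  from borel_measurable_less[OF borel_measurable_const[of e] this]
  have "{p::'a \<times> 'a. e < dist (fst p) (snd p)} \<in> sets (borel \<Otimes>\<^sub>M borel)"
    by (simp add: space_pair_measure)
  moreover have "(\<lambda>p. indicator (T \<inter> {y. e < dist (fst p) y}) (snd p) :: real)
      = (\<lambda>p. indicator T (snd p) * indicator {p. e < dist (fst p) (snd p)} p)"
    by (auto simp: indicator_def fun_eq_iff)
  ultimately show ?thesis
    using assms by (simp add: borel_measurable_times measurable_compose[OF measurable_snd borel_measurable_indicator])
qed

lemma borel_measurable_riesz_far:
  "T \<in> sets borel \<Longrightarrow> (\<lambda>z. riesz M s (T \<inter> {y. e < dist z y}) z) \<in> borel_measurable M"
  unfolding riesz_def
  by (intro borel_measurable_integral_snd borel_measurable_scaleR borel_measurable_riesz_kernel_pair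
      borel_measurable_indicator_far)

lemma integrable_riesz_far:
  assumes "0 < e" "T \<in> sets borel"
  shows "integrable M (\<lambda>w. indicator (T \<inter> {y. e < dist z y}) w *\<^sub>R riesz_kernel s z w)"
proof (rule integrable_const_bound)
  show "AE w in M. norm (indicator (T \<inter> {y. e < dist z y}) w *\<^sub>R riesz_kernel s z w) \<le> e powr (-s)"
    by (intro AE_I2 norm_truncated_riesz_kernel_le s_pos assms(1))
  have "open {y. e < dist z y}" by (intro open_Collect_less continuous_intros)
  then have "(\<lambda>w. indicator (T \<inter> {y. e < dist z y}) w :: real) \<in> borel_measurable borel"
    using assms(2) borel_open by (intro borel_measurable_indicator sets.Int) auto
  with borel_measurable_riesz_kernel show "(\<lambda>w. indicator (T \<inter> {y. e < dist z y}) w *\<^sub>R riesz_kernel s z w) \<in> borel_measurable M"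
    by (intro borel_measurable_M borel_measurable_scaleR)
qed

lemma norm_riesz_far_le:
  assumes "0 < e" "T \<in> sets borel"
  shows "norm (riesz M s (T \<inter> {y. e < dist z y}) z) \<le> e powr (-s) * measure M (space M)"
proof -
  have "norm (riesz M s (T \<inter> {y. e < dist z y}) z)
      \<le> (\<integral>w. norm (indicator (T \<inter> {y. e < dist z y}) w *\<^sub>R riesz_kernel s z w) \<partial>M)"
    unfolding riesz_def by (rule integral_norm_bound)
  also have "\<dots> \<le> (\<integral>w. e powr (-s) \<partial>M)"
    by (intro integral_mono integrable_norm integrable_riesz_far assms norm_truncated_riesz_kernel_le s_pos) simp
  finally show ?thesis by (simp add: mult.commute)
qed

text \<open>The integrand is odd in (z, w), so by Fubini the integral equals its own negative.\<close>

lemma integral_riesz_far_self_eq_0: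
  assumes "0 < e" "T \<in> sets borel"
  shows "(\<integral>z. indicator T z *\<^sub>R riesz M s (T \<inter> {y. e < dist z y}) z \<partial>M) = 0"
proof -
  define h where "h z w = (indicator T z * indicator (T \<inter> {y. e < dist z y}) w) *\<^sub>R riesz_kernel s z w" for z w
  have iterated: "(\<integral>z. indicator T z *\<^sub>R riesz M s (T \<inter> {y. e < dist z y}) z \<partial>M) = (\<integral>z. (\<integral>w. h z w \<partial>M) \<partial>M)"
    unfolding h_def riesz_def by (simp add: mult.assoc flip: integral_scaleR_right)
  moreover have "integrable (M \<Otimes>\<^sub>M M) (\<lambda>(z, w). h z w)"
  proof (rule finite_measure.integrable_const_bound)
    show "finite_measure (M \<Otimes>\<^sub>M M)" by (intro finite_measure_pair_measure finite_measure_axioms)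
    show "AE p in M \<Otimes>\<^sub>M M. norm ((\<lambda>(z, w). h z w) p) \<le> e powr (-s)"
    proof (intro AE_I2)
      fix p :: "'a \<times> 'a"
      show "norm ((\<lambda>(z, w). h z w) p) \<le> e powr (-s)"
        using norm_truncated_riesz_kernel_le[OF s_pos assms(1), of T "fst p" "snd p"]
        unfolding h_def by (auto simp: case_prod_beta indicator_def)
    qed
    show "(\<lambda>(z, w). h z w) \<in> borel_measurable (M \<Otimes>\<^sub>M M)"
      unfolding h_def case_prod_beta using assms(2)
      by (intro borel_measurable_M_pair borel_measurable_scaleR borel_measurable_times borel_measurable_riesz_kernel_pair
          borel_measurable_indicator_far measurable_compose[OF measurable_fst borel_measurable_indicator])
  qed
  then have Fubini: "(\<integral>w. (\<integral>z. h z w \<partial>M) \<partial>M) = (\<integral>z. (\<integral>w. h z w \<partial>M) \<partial>M)"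
    by (intro pair_sigma_finite.Fubini_integral pair_sigma_finite.intro sigma_finite_measure_axioms)
  have antisym: "h z w = - h w z" for z w
    unfolding h_def riesz_kernel_antisym[of s z w] by (auto simp: indicator_def dist_commute)
  have "(\<integral>w. (\<integral>z. h z w \<partial>M) \<partial>M) = - (\<integral>w. (\<integral>z. h w z \<partial>M) \<partial>M)"
    unfolding integral_minus[symmetric] by (intro Bochner_Integration.integral_cong refl antisym)
  with Fubini have "(\<integral>z. (\<integral>w. h z w \<partial>M) \<partial>M) = - (\<integral>z. (\<integral>w. h z w \<partial>M) \<partial>M)" by simp
  then show ?thesis
    unfolding iterated by (metis eq_neg_iff_add_eq_0 scaleR_2 scaleR_eq_0_iff zero_neq_numeral)
qed

end

section \<open>Riesz transforms of measures on a Cantor set\<close>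

locale cantor_riesz = cantor_cubes c D + riesz_measure M s
  for c and D :: "nat \<Rightarrow> 'a::euclidean_space set set" and M and s +
  assumes null_outside_cantor_set: "emeasure M (- cantor_set D) = 0"
    and measure_cube_pos: "P \<in> cubes D \<Longrightarrow> 0 < measure M P"
begin

lemma cube_borel: "P \<in> cubes D \<Longrightarrow> P \<in> sets borel"
  using closed_cube mem_cubes_iff borel_closed by blast

lemma cube_sets_M: "P \<in> cubes D \<Longrightarrow> P \<in> sets M"
  using cube_borel sets_M by simp

lemma AE_cantor_set: "AE w in M. w \<in> cantor_set D"
proof (rule AE_I[OF _ null_outside_cantor_set])
  have "closed (\<Union>(D k))" for k using finite_generation closed_cube by blast
  then have "closed (cantor_set D)" unfolding cantor_set_def by blast
  then show "- cantor_set D \<in> sets M" using sets_M by simp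
qed auto

lemma norm_integral_off_cube_le:
  fixes g :: "'a \<Rightarrow> 'b::{banach, second_countable_topology}"
  assumes Q: "Q \<in> cubes D" "A \<in> cubes D" "Q \<subseteq> A"
    and S: "S \<in> sets borel" "S \<inter> cantor_set D \<subseteq> A - Q"
    and g: "g \<in> borel_measurable M" and h: "\<And>P. 0 \<le> h P"
    and g_bound: "\<And>P w. 0 < diameter P \<Longrightarrow> (\<forall>x\<in>Q. c * diameter P \<le> dist x w) \<Longrightarrow> norm (g w) \<le> h P"
  shows "integrable M (\<lambda>w. indicator S w *\<^sub>R g w)"
    and "norm (\<integral>w. indicator S w *\<^sub>R g w \<partial>M) \<le> (\<Sum>P\<in>cubes_between D Q A. measure M P * h P)"
proof -
  have F: "finite (cubes_between D Q A)"
    by (rule finite_subset[OF _ finite_cubes_above[OF Q(1)]]) auto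
  have bound: "AE w in M. norm (indicator S w *\<^sub>R g w) \<le> (\<Sum>P\<in>cubes_between D Q A. indicator P w * h P)"
    using AE_cantor_set
  proof eventually_elim
    case (elim w)
    show ?case
    proof (cases "w \<in> S")
      case True
      then obtain P where P: "P \<in> cubes_between D Q A" "w \<in> P" "\<forall>x\<in>Q. c * diameter P \<le> dist x w"
        using separating_cube[OF Q elim] S(2) elim by blast
      obtain x where "x \<in> Q" using cube_nonempty Q(1) by blast
      then have "0 < dist x w" using True elim S(2) by auto
      also have "dist x w \<le> diameter P"
        using diameter_bounded_bound[OF bounded_cube] P \<open>x \<in> Q\<close> by blast
      finally have "norm (g w) \<le> h P" using g_bound P by blast
      also have "\<dots> = indicator P w * h P" using P by simp
      also have "\<dots> \<le> (\<Sum>P\<in>cubes_between D Q A. indicator P w * h P)"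
        using F P h by (intro member_le_sum) auto
      finally show ?thesis using True by simp
    qed (simp add: h sum_nonneg)
  qed
  have sets: "P \<in> sets M" and finite: "emeasure M P < \<infinity>" if "P \<in> cubes_between D Q A" for P
    using cube_sets_M that by (simp_all add: emeasure_eq_measure)
  have "(\<lambda>w. indicator S w *\<^sub>R g w) \<in> borel_measurable M"
    using S(1) sets_M by (intro borel_measurable_scaleR borel_measurable_indicator g) simp
  from norm_integral_le_step_majorant[OF F sets finite this bound]
  show "integrable M (\<lambda>w. indicator S w *\<^sub>R g w)"
    and "norm (\<integral>w. indicator S w *\<^sub>R g w \<partial>M) \<le> (\<Sum>P\<in>cubes_between D Q A. measure M P * h P)"
    by simp_all
qed

lemma riesz_off_cube_bound:
  assumes Q: "Q \<in> cubes D" "A \<in> cubes D" "Q \<subseteq> A"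
    and S: "S \<in> sets borel" "S \<inter> cantor_set D \<subseteq> A - Q" and x: "x \<in> Q"
  shows "integrable M (\<lambda>w. indicator S w *\<^sub>R riesz_kernel s x w)"
    and "norm (riesz M s S x) \<le> c powr (-s) * (\<Sum>P\<in>cubes_between D Q A. Theta M s P)"
proof -
  have kernel: "norm (riesz_kernel s x w) \<le> (c * diameter P) powr (-s)"
    if "0 < diameter P" "\<forall>x\<in>Q. c * diameter P \<le> dist x w" for P w
  proof (rule norm_riesz_kernel_le[OF s_pos])
    show "0 < c * diameter P" using c_pos that(1) by simp
    show "c * diameter P \<le> dist x w" using that(2) x by blast
  qed
  have "0 \<le> (c * diameter P) powr (-s)" for P by simp
  note bound = norm_integral_off_cube_le[where h="\<lambda>P. (c * diameter P) powr (-s)",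
      OF Q S borel_measurable_M[OF borel_measurable_riesz_kernel] this kernel]
  then show "integrable M (\<lambda>w. indicator S w *\<^sub>R riesz_kernel s x w)" by simp
  have "(\<Sum>P\<in>cubes_between D Q A. measure M P * (c * diameter P) powr (-s))
      = c powr (-s) * (\<Sum>P\<in>cubes_between D Q A. Theta M s P)"
    unfolding Theta_def sum_distrib_left using c_pos
    by (intro sum.cong refl) (simp add: powr_mult powr_minus_divide)
  with bound(2) show "norm (riesz M s S x) \<le> c powr (-s) * (\<Sum>P\<in>cubes_between D Q A. Theta M s P)"
    unfolding riesz_def by simp
qed

lemma pcoef2_eq:
  assumes "Q \<in> cubes D"
  shows "pcoef2 D M s Q A = diameter Q * (\<Sum>P\<in>cubes_between D Q A. measure M P * diameter P powr (-(s + 1)))"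
  unfolding pcoef2_def sum_distrib_left Theta_def
proof (intro sum.cong refl)
  fix P assume "P \<in> cubes_between D Q A"
  then have "0 \<le> diameter P" using diameter_ge_0 bounded_cube by blast
  moreover have "diameter P powr (-(s + 1)) = 1 / (diameter P * diameter P powr s)" if "0 < diameter P"
  proof -
    have "diameter P powr (s + 1) = diameter P * diameter P powr s" using that by (simp add: powr_add)
    then show ?thesis by (simp only: powr_minus_divide)
  qed
  ultimately show "diameter Q / diameter P * (measure M P / diameter P powr s)
      = diameter Q * (measure M P * diameter P powr (-(s + 1)))"
    by (cases "diameter P = 0") simp_all
qed

lemma norm_riesz_off_cube_diff_le:
  assumes Q: "Q \<in> cubes D" "A \<in> cubes D" "Q \<subseteq> A"
    and S: "S \<in> sets borel" "S \<inter> cantor_set D \<subseteq> A - Q" and xy: "x \<in> Q" "y \<in> Q"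
  shows "norm (riesz M s S x - riesz M s S y)
           \<le> (2 * s + 3) * c powr (-(s + 1)) * (dist x y / diameter Q) * pcoef2 D M s Q A"
proof (cases "diameter Q = 0")
  case True
  then have "x = y" using diameter_bounded_bound[OF bounded_cube[OF Q(1)] xy] by simp
  then show ?thesis by simp
next
  case False
  define K where "K = (2 * s + 3) * c powr (-(s + 1))"
  have kernel: "norm (riesz_kernel s x w - riesz_kernel s y w) \<le> (2 * s + 3) * dist x y * (c * diameter P) powr (-(s + 1))"
    if "0 < diameter P" "\<forall>x\<in>Q. c * diameter P \<le> dist x w" for P w
  proof (rule riesz_kernel_diff_le[OF s_pos])
    show "0 < c * diameter P" using c_pos that(1) by simp
    show "c * diameter P \<le> dist x w" "c * diameter P \<le> dist y w" using that(2) xy by blast+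
  qed
  have meas: "(\<lambda>w. riesz_kernel s x w - riesz_kernel s y w) \<in> borel_measurable M"
    by (intro borel_measurable_M borel_measurable_diff borel_measurable_riesz_kernel)
  have "0 \<le> (2 * s + 3) * dist x y * (c * diameter P) powr (-(s + 1))" for P
    using s_pos by simp
  note bound = norm_integral_off_cube_le(2)[where h="\<lambda>P. (2 * s + 3) * dist x y * (c * diameter P) powr (-(s + 1))",
      OF Q S meas this kernel]
  have "riesz M s S x - riesz M s S y = (\<integral>w. indicator S w *\<^sub>R (riesz_kernel s x w - riesz_kernel s y w) \<partial>M)"
    unfolding riesz_def scaleR_diff_right
    using riesz_off_cube_bound(1)[OF Q S xy(1)] riesz_off_cube_bound(1)[OF Q S xy(2)] by simp
  also have "norm \<dots> \<le> (\<Sum>P\<in>cubes_between D Q A. measure M P * ((2 * s + 3) * dist x y * (c * diameter P) powr (-(s + 1))))"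
    by (rule bound)
  also have "\<dots> = K * dist x y * (\<Sum>P\<in>cubes_between D Q A. measure M P * diameter P powr (-(s + 1)))"
    unfolding K_def sum_distrib_left using c_pos by (intro sum.cong refl) (simp add: powr_mult)
  also have "\<dots> = K * (dist x y / diameter Q) * pcoef2 D M s Q A"
    unfolding pcoef2_eq[OF Q(1)] using False by simp
  finally show ?thesis unfolding K_def .
qed

lemma riesz_complement_bound:
  assumes Q: "Q \<in> cubes D" and z: "z \<in> Q"
  shows "integrable M (\<lambda>w. indicator (- Q) w *\<^sub>R riesz_kernel s z w)"
    and "norm (riesz M s (- Q) z) \<le> c powr (-s) * (\<Sum>P\<in>cubes_between D Q top_cube. Theta M s P)"
proof -
  have "- Q \<in> sets borel" using cube_borel[OF Q] by simp
  moreover have "- Q \<inter> cantor_set D \<subseteq> top_cube - Q" using cantor_set_subset_top by blast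
  ultimately show "integrable M (\<lambda>w. indicator (- Q) w *\<^sub>R riesz_kernel s z w)"
    and "norm (riesz M s (- Q) z) \<le> c powr (-s) * (\<Sum>P\<in>cubes_between D Q top_cube. Theta M s P)"
    using riesz_off_cube_bound[OF Q top_cube_in_cubes cube_subset_top[OF Q] _ _ z] by blast+
qed

lemma set_integrable_riesz_complement:
  assumes "Q \<in> cubes D" shows "set_integrable M Q (riesz M s (- Q))"
proof (rule set_integrable_bounded[OF cube_sets_M[OF assms] borel_measurable_riesz riesz_complement_bound(2)[OF assms]])
  show "- Q \<in> sets borel" using cube_borel[OF assms] by simp
qed

lemma riesz_trunc_split:
  assumes Q: "Q \<in> cubes D" and z: "z \<in> Q" and e: "0 < e" "e < \<delta>"
    and gap: "\<forall>w\<in>cantor_set D - Q. \<delta> \<le> dist z w"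
  shows "riesz_trunc M s e z = riesz M s (Q \<inter> {y. e < dist z y}) z + riesz M s (- Q) z"
proof -
  have Q_borel: "Q \<in> sets borel" "- Q \<in> sets borel" using cube_borel[OF Q] by simp_all
  have "riesz M s (- Q \<inter> {y. e < dist z y}) z = riesz M s (- Q) z"
    unfolding riesz_def
  proof (rule integral_cong_AE)
    show "(\<lambda>w. indicator (- Q \<inter> {y. e < dist z y}) w *\<^sub>R riesz_kernel s z w) \<in> borel_measurable M"
      using integrable_riesz_far[OF e(1) Q_borel(2)] by simp
    show "(\<lambda>w. indicator (- Q) w *\<^sub>R riesz_kernel s z w) \<in> borel_measurable M"
      using riesz_complement_bound(1)[OF Q z] by simp
    show "AE w in M. indicator (- Q \<inter> {y. e < dist z y}) w *\<^sub>R riesz_kernel s z w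
                   = indicator (- Q) w *\<^sub>R riesz_kernel s z w"
      using AE_cantor_set
    proof eventually_elim
      case (elim w)
      have "e < dist z w" if "w \<notin> Q"
        using gap elim that e(2) by force
      then show ?case by (simp add: indicator_def)
    qed
  qed
  moreover have "{y. e < dist z y} = (Q \<inter> {y. e < dist z y}) \<union> (- Q \<inter> {y. e < dist z y})" by blast
  moreover have "riesz M s ((Q \<inter> {y. e < dist z y}) \<union> (- Q \<inter> {y. e < dist z y})) z
      = riesz M s (Q \<inter> {y. e < dist z y}) z + riesz M s (- Q \<inter> {y. e < dist z y}) z"
    by (intro riesz_Un integrable_riesz_far e(1) Q_borel) blast
  ultimately show ?thesis unfolding riesz_trunc_eq_riesz by simp
qed

lemma set_integral_riesz_trunc_eq:
  assumes Q: "Q \<in> cubes D" and e: "0 < e" "e < \<delta>"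
    and gap: "\<forall>z\<in>Q. \<forall>w\<in>cantor_set D - Q. \<delta> \<le> dist z w"
  shows "set_integrable M Q (riesz_trunc M s e)"
    and "(LINT z:Q|M. riesz_trunc M s e z) = (LINT z:Q|M. riesz M s (- Q) z)"
proof -
  define N where "N z = riesz M s (Q \<inter> {y. e < dist z y}) z" for z
  have Q_borel: "Q \<in> sets borel" by (rule cube_borel[OF Q])
  have N: "set_integrable M Q N"
    unfolding N_def using norm_riesz_far_le[OF e(1) Q_borel]
    by (intro set_integrable_bounded cube_sets_M Q borel_measurable_riesz_far Q_borel)
  have N_zero: "(LINT z:Q|M. N z) = 0"
    unfolding N_def set_lebesgue_integral_def by (rule integral_riesz_far_self_eq_0[OF e(1) Q_borel])
  have split: "riesz_trunc M s e z = N z + riesz M s (- Q) z" if "z \<in> Q" for z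
    unfolding N_def using riesz_trunc_split[OF Q that e] gap that by blast
  note sum = set_integral_add[OF N set_integrable_riesz_complement[OF Q]]
  show "set_integrable M Q (riesz_trunc M s e)"
    using sum(1) split by (subst set_integrable_cong) auto
  have "(LINT z:Q|M. riesz_trunc M s e z) = (LINT z:Q|M. N z + riesz M s (- Q) z)"
    using split by (intro set_lebesgue_integral_cong cube_sets_M Q) auto
  also have "\<dots> = (LINT z:Q|M. riesz M s (- Q) z)" unfolding sum(2) N_zero by simp
  finally show "(LINT z:Q|M. riesz_trunc M s e z) = (LINT z:Q|M. riesz M s (- Q) z)" .
qed

lemma set_integral_eq_riesz_complement:
  assumes Q: "Q \<in> cubes D" and Rmu: "set_integrable M Q Rmu"
    and lim: "((\<lambda>\<epsilon>. \<integral>\<^sup>+ z. indicator Q z * ennreal (norm (riesz_trunc M s \<epsilon> z - Rmu z)) \<partial>M) \<longlongrightarrow> 0) (at_right 0)"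
  shows "(LINT z:Q|M. Rmu z) = (LINT z:Q|M. riesz M s (- Q) z)"
proof -
  obtain \<delta> where \<delta>: "0 < \<delta>" "\<forall>z\<in>Q. \<forall>w\<in>cantor_set D - Q. \<delta> \<le> dist z w"
    using cantor_set_gap[OF Q] by blast
  define X where "X = (LINT z:Q|M. Rmu z) - (LINT z:Q|M. riesz M s (- Q) z)"
  have "\<forall>\<^sub>F \<epsilon> in at_right 0. ennreal (norm X) \<le> (\<integral>\<^sup>+ z. indicator Q z * ennreal (norm (riesz_trunc M s \<epsilon> z - Rmu z)) \<partial>M)"
    using eventually_at_right_real[OF \<delta>(1)]
  proof eventually_elim
    case (elim e)
    then have e: "0 < e" "e < \<delta>" by auto
    note trunc = set_integral_riesz_trunc_eq[OF Q e \<delta>(2)]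
    have "X = (LINT z:Q|M. Rmu z - riesz_trunc M s e z)"
      unfolding X_def trunc(2)[symmetric] using set_integral_diff(2)[OF Rmu trunc(1)] by simp
    moreover have "integrable M (\<lambda>z. indicator Q z *\<^sub>R (Rmu z - riesz_trunc M s e z))"
      using set_integral_diff(1)[OF Rmu trunc(1)] unfolding set_integrable_def .
    ultimately have "ennreal (norm X) \<le> (\<integral>\<^sup>+ z. ennreal (norm (indicator Q z *\<^sub>R (Rmu z - riesz_trunc M s e z))) \<partial>M)"
      unfolding set_lebesgue_integral_def by (simp only: integral_norm_bound_ennreal)
    also have "\<dots> = (\<integral>\<^sup>+ z. indicator Q z * ennreal (norm (riesz_trunc M s e z - Rmu z)) \<partial>M)"
      by (intro nn_integral_cong) (simp add: indicator_def norm_minus_commute)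
    finally show ?case .
  qed
  then have "ennreal (norm X) \<le> 0"
    by (rule tendsto_le[OF trivial_limit_at_right_real lim tendsto_const])
  then show ?thesis unfolding X_def by simp
qed

lemma norm_riesz_off_cube_oscillation_le:
  assumes Q: "Q \<in> cubes D" "A \<in> cubes D" "Q \<subseteq> A"
    and S: "S \<in> sets borel" "S \<inter> cantor_set D \<subseteq> A - Q" and xy: "x \<in> Q" "y \<in> Q"
  shows "norm (riesz M s S x - riesz M s S y) \<le> (2 * s + 3) * c powr (-(s + 1)) * pcoef2 D M s Q A"
proof -
  have "dist x y \<le> diameter Q" "0 \<le> diameter Q"
    using diameter_bounded_bound[OF bounded_cube[OF Q(1)] xy] diameter_ge_0[OF bounded_cube[OF Q(1)]] .
  then have "dist x y / diameter Q \<le> 1" by (cases "diameter Q = 0") simp_all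
  moreover have "0 \<le> pcoef2 D M s Q A"
    unfolding pcoef2_def Theta_def
    by (intro sum_nonneg mult_nonneg_nonneg divide_nonneg_nonneg diameter_ge_0 bounded_cube Q(1)) auto
  moreover have "0 \<le> (2 * s + 3) * c powr (-(s + 1))" using s_pos by simp
  ultimately have "(2 * s + 3) * c powr (-(s + 1)) * (dist x y / diameter Q) * pcoef2 D M s Q A
      \<le> (2 * s + 3) * c powr (-(s + 1)) * 1 * pcoef2 D M s Q A"
    by (intro mult_right_mono mult_left_mono)
  with norm_riesz_off_cube_diff_le[OF assms] show ?thesis by simp
qed

lemma pcoef_eq_pcoef2_top: "R \<in> cubes D \<Longrightarrow> pcoef D M s R = pcoef2 D M s R top_cube"
  unfolding pcoef_def pcoef2_def using cube_subset_top by (intro sum.cong) auto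

lemma riesz_complement_split:
  assumes Q: "Q \<in> cubes D" "R \<in> cubes D" "Q \<subseteq> R" and z: "z \<in> Q"
  shows "riesz M s (- Q) z = riesz M s (R - Q) z + riesz M s (- R) z"
proof -
  have "integrable M (\<lambda>w. indicator (R - Q) w *\<^sub>R riesz_kernel s z w)"
    using cube_borel Q z by (intro riesz_off_cube_bound(1)[OF Q]) auto
  moreover have "integrable M (\<lambda>w. indicator (- R) w *\<^sub>R riesz_kernel s z w)"
    using z Q(3) by (intro riesz_complement_bound(1)[OF Q(2)]) auto
  ultimately have "riesz M s ((R - Q) \<union> - R) z = riesz M s (R - Q) z + riesz M s (- R) z"
    by (intro riesz_Un) auto
  moreover have "(R - Q) \<union> - R = - Q" using Q(3) by blast
  ultimately show ?thesis by simp
qed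

lemma norm_riesz_annulus_minus_mean_diff_le:
  assumes Q: "Q \<in> cubes D" "R \<in> cubes D" "Q \<subseteq> R" and x: "x \<in> Q"
    and Rmu: "\<forall>P\<in>cubes D. set_integrable M P Rmu"
      "\<forall>P\<in>cubes D. ((\<lambda>\<epsilon>. \<integral>\<^sup>+ z. indicator P z * ennreal (norm (riesz_trunc M s \<epsilon> z - Rmu z)) \<partial>M) \<longlongrightarrow> 0) (at_right 0)"
  shows "norm (riesz M s (R - Q) x - (mean M Q Rmu - mean M R Rmu))
           \<le> (2 * s + 3) * c powr (-(s + 1)) * (pcoef2 D M s Q R + 2 * pcoef D M s R)"
proof -
  define K where "K = (2 * s + 3) * c powr (-(s + 1))"
  define f1 f2 where "f1 = riesz M s (R - Q)" and "f2 = riesz M s (- R)"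
  have borel: "R - Q \<in> sets borel" "- R \<in> sets borel" "- Q \<in> sets borel"
    using cube_borel Q by auto
  have top: "- R \<inter> cantor_set D \<subseteq> top_cube - R" using cantor_set_subset_top by blast
  have xR: "x \<in> R" using x Q(3) by blast
  have f1_osc: "norm (f1 z - f1 x) \<le> K * pcoef2 D M s Q R" if "z \<in> Q" for z
    unfolding f1_def K_def using borel(1) that x by (intro norm_riesz_off_cube_oscillation_le Q) auto
  have f2_osc: "norm (f2 z - f2 x) \<le> K * pcoef D M s R" if "z \<in> R" for z
    unfolding f2_def K_def pcoef_eq_pcoef2_top[OF Q(2)]
    using borel(2) top that xR by (intro norm_riesz_off_cube_oscillation_le Q(2) top_cube_in_cubes cube_subset_top)
  have means: "mean M Q Rmu = mean M Q (riesz M s (- Q))" "mean M R Rmu = mean M R f2"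
    unfolding mean_def f2_def using set_integral_eq_riesz_complement Q Rmu by simp_all
  have mean_Q: "norm (mean M Q Rmu - (f1 x + f2 x)) \<le> K * pcoef2 D M s Q R + K * pcoef D M s R"
    unfolding means
  proof (rule norm_mean_diff_le[OF finite_measure_axioms cube_sets_M[OF Q(1)] measure_cube_pos[OF Q(1)]])
    show "riesz M s (- Q) \<in> borel_measurable M" using borel(3) by (rule borel_measurable_riesz)
    fix z assume z: "z \<in> Q"
    have "norm (riesz M s (- Q) z - (f1 x + f2 x)) = norm ((f1 z - f1 x) + (f2 z - f2 x))"
      unfolding riesz_complement_split[OF Q z] f1_def f2_def by (simp add: algebra_simps)
    also have "\<dots> \<le> norm (f1 z - f1 x) + norm (f2 z - f2 x)" by (rule norm_triangle_ineq)
    also have "\<dots> \<le> K * pcoef2 D M s Q R + K * pcoef D M s R"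
      using f1_osc[OF z] f2_osc z Q(3) by (meson add_mono subsetD)
    finally show "norm (riesz M s (- Q) z - (f1 x + f2 x)) \<le> K * pcoef2 D M s Q R + K * pcoef D M s R" .
  qed
  have mean_R: "norm (mean M R Rmu - f2 x) \<le> K * pcoef D M s R"
    unfolding means f2_def using f2_osc[unfolded f2_def]
    by (intro norm_mean_diff_le finite_measure_axioms cube_sets_M measure_cube_pos Q(2) borel_measurable_riesz borel(2))
  have "riesz M s (R - Q) x - (mean M Q Rmu - mean M R Rmu)
      = - (mean M Q Rmu - (f1 x + f2 x)) + (mean M R Rmu - f2 x)"
    unfolding f1_def by (simp add: algebra_simps)
  also have "norm \<dots> \<le> norm (mean M Q Rmu - (f1 x + f2 x)) + norm (mean M R Rmu - f2 x)"
    using norm_triangle_ineq by (metis norm_minus_cancel)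
  also have "\<dots> \<le> K * (pcoef2 D M s Q R + 2 * pcoef D M s R)"
    using mean_Q mean_R by (simp add: algebra_simps)
  finally show ?thesis unfolding K_def .
qed

lemma riesz_annulus_estimates:
  assumes Q: "Q \<in> cubes D" "R \<in> cubes D" "Q \<subseteq> R" and xy: "x \<in> Q" "y \<in> Q"
    and Rmu: "\<forall>P\<in>cubes D. set_integrable M P Rmu"
      "\<forall>P\<in>cubes D. ((\<lambda>\<epsilon>. \<integral>\<^sup>+ z. indicator P z * ennreal (norm (riesz_trunc M s \<epsilon> z - Rmu z)) \<partial>M) \<longlongrightarrow> 0) (at_right 0)"
  defines "C \<equiv> c powr (-s) + 2 * ((2 * s + 3) * c powr (-(s + 1)))"
  shows "norm (riesz M s (R - Q) x) \<le> C * (\<Sum>P\<in>cubes_between D Q R. Theta M s P)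
       \<and> norm (riesz M s (R - Q) x - riesz M s (R - Q) y) \<le> C * (dist x y / diameter Q) * pcoef2 D M s Q R
       \<and> norm (riesz M s (R - Q) x - (mean M Q Rmu - mean M R Rmu)) \<le> C * (pcoef2 D M s Q R + pcoef D M s R)"
proof (intro conjI)
  define K where "K = (2 * s + 3) * c powr (-(s + 1))"
  have K: "0 \<le> K" "K \<le> C" "2 * K \<le> C" "c powr (-s) \<le> C"
    unfolding C_def K_def using s_pos by simp_all
  have nonneg: "0 \<le> (\<Sum>P\<in>cubes_between D Q R. Theta M s P)" "0 \<le> dist x y / diameter Q"
    "0 \<le> pcoef2 D M s Q R" "0 \<le> pcoef D M s R"
    unfolding pcoef_def pcoef2_def Theta_def
    by (intro sum_nonneg mult_nonneg_nonneg divide_nonneg_nonneg diameter_ge_0 bounded_cube; use Q in auto)+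
  have borel: "R - Q \<in> sets borel" using cube_borel Q by auto
  have "norm (riesz M s (R - Q) x) \<le> c powr (-s) * (\<Sum>P\<in>cubes_between D Q R. Theta M s P)"
    using borel xy by (intro riesz_off_cube_bound(2)[OF Q]) auto
  then show "norm (riesz M s (R - Q) x) \<le> C * (\<Sum>P\<in>cubes_between D Q R. Theta M s P)"
    using mult_right_mono[OF K(4) nonneg(1)] by linarith
  have "norm (riesz M s (R - Q) x - riesz M s (R - Q) y) \<le> K * (dist x y / diameter Q) * pcoef2 D M s Q R"
    unfolding K_def using borel xy by (intro norm_riesz_off_cube_diff_le Q) auto
  then show "norm (riesz M s (R - Q) x - riesz M s (R - Q) y) \<le> C * (dist x y / diameter Q) * pcoef2 D M s Q R"
    using mult_right_mono[OF mult_right_mono[OF K(2) nonneg(2)] nonneg(3)] by linarith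
  have "norm (riesz M s (R - Q) x - (mean M Q Rmu - mean M R Rmu)) \<le> K * (pcoef2 D M s Q R + 2 * pcoef D M s R)"
    unfolding K_def by (rule norm_riesz_annulus_minus_mean_diff_le[OF Q xy(1) Rmu])
  also have "\<dots> \<le> C * (pcoef2 D M s Q R + pcoef D M s R)"
    using mult_right_mono[OF K(2) nonneg(3)] mult_right_mono[OF K(3) nonneg(4)] by (simp add: algebra_simps)
  finally show "norm (riesz M s (R - Q) x - (mean M Q Rmu - mean M R Rmu)) \<le> C * (pcoef2 D M s Q R + pcoef D M s R)" .
qed

end

theorem lemma2p3:
  fixes s c :: real
  assumes "0 < s" "s < real DIM('a::euclidean_space)" "0 < c"
  shows "\<exists>C>0. \<forall>(D :: nat \<Rightarrow> 'a set set) (M :: 'a measure) (Rmu :: 'a \<Rightarrow> 'a) Q R x y.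
     cantor_system c D \<and>
     sets M = sets borel \<and> finite_measure M \<and>
     emeasure M (- cantor_set D) = 0 \<and>
     (\<forall>P\<in>cubes D. 0 < measure M P) \<and>
     Rmu \<in> borel_measurable M \<and>
     (\<forall>P\<in>cubes D. set_integrable M P Rmu) \<and>
     (\<forall>P\<in>cubes D. ((\<lambda>\<epsilon>. \<integral>\<^sup>+ z. indicator P z * ennreal (norm (riesz_trunc M s \<epsilon> z - Rmu z)) \<partial>M)
                        \<longlongrightarrow> 0) (at_right 0)) \<and>
     Q \<in> cubes D \<and> R \<in> cubes D \<and> Q \<subseteq> R \<and> x \<in> Q \<and> y \<in> Q
     \<longrightarrow>
       norm (riesz M s (R - Q) x) \<le> C * (\<Sum>P\<in>{P\<in>cubes D. Q \<subseteq> P \<and> P \<subseteq> R}. Theta M s P) \<and>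
       norm (riesz M s (R - Q) x - riesz M s (R - Q) y) \<le> C * (dist x y / diameter Q) * pcoef2 D M s Q R \<and>
       norm (riesz M s (R - Q) x - (mean M Q Rmu - mean M R Rmu)) \<le> C * (pcoef2 D M s Q R + pcoef D M s R)"
proof -
  define C where "C = c powr (-s) + 2 * ((2 * s + 3) * c powr (-(s + 1)))"
  have C_pos: "0 < C" unfolding C_def using assms(1,3) by (simp add: add_pos_nonneg)
  have is_cantor_riesz: "cantor_riesz c D M s"
    if "cantor_system c D" "sets M = sets borel" "finite_measure M" "emeasure M (- cantor_set D) = 0"
      "\<forall>P\<in>cubes D. 0 < measure M P" for D :: "nat \<Rightarrow> 'a set set" and M
  proof (intro cantor_riesz.intro cantor_cubes.intro riesz_measure.intro cantor_riesz_axioms.intro riesz_measure_axioms.intro)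
    show "P \<noteq> {}" if "P \<in> cubes D" for P using that \<open>\<forall>P\<in>cubes D. 0 < measure M P\<close> by force
  qed (use that assms in auto)
  show ?thesis
  proof (intro exI[of _ C] conjI[OF C_pos] allI impI, elim conjE, goal_cases)
    case (1 D M Rmu Q R x y)
    show ?case
      using cantor_riesz.riesz_annulus_estimates[OF is_cantor_riesz[OF 1(1-5)] 1(9-13) 1(7,8)]
      unfolding C_def .
  qed
qed

end
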